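(* Let $X$ be a spectral space. Then $\mathcal X'(X)$ with the Zariski topology is a spectral space, and its inverse topology coincides with the lower Vietoris topology on $\mathcal X'(X)$.
   Context: $\mathcal X'(X)$ is the set of nonempty closed subsets of $X$. Its Zariski topology has as basis of open sets $\mathcal U'(\Omega):=\{Y\in\mathcal X'(X)\mid Y\cap\Omega=\emptyset\}$, $\Omega$ ranging over quasi-compact open subsets of $X$. For a spectral space $Y$, the inverse topology on $Y$ is the topology having the quasi-compact open subsets of $Y$ as a basis of closed sets. The lower Vietoris topology on $\mathcal X'(X)$ is the topology with subbasis of open sets $U^-:=\{C\in\mathcal X'(X)\mid C\cap U\neq\emptyset\}$, $U$ ranging over open subsets of $X$. *)

theory Defs
  imports "HOL-Analysis.Analysis"
begin

definition qc_open :: "'a topology \<Rightarrow> 'a set \<Rightarrow> bool" where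
  "qc_open X U \<longleftrightarrow> openin X U \<and> compactin X U"

definition irreducible_in :: "'a topology \<Rightarrow> 'a set \<Rightarrow> bool" where
  "irreducible_in X C \<longleftrightarrow> C \<subseteq> topspace X \<and> C \<noteq> {} \<and>
     (\<forall>A B. closedin X A \<and> closedin X B \<and> C \<subseteq> A \<union> B \<longrightarrow> C \<subseteq> A \<or> C \<subseteq> B)"

definition spectral_space :: "'a topology \<Rightarrow> bool" where
  "spectral_space X \<longleftrightarrow>
     compact_space X \<and> t0_space X \<and>
     (\<forall>U V. qc_open X U \<and> qc_open X V \<longrightarrow> qc_open X (U \<inter> V)) \<and>
     openin X = arbitrary union_of (qc_open X) \<and>
     (\<forall>C. closedin X C \<and> irreducible_in X C \<longrightarrow> (\<exists>x\<in>topspace X. X closure_of {x} = C))"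

definition inverse_topology :: "'a topology \<Rightarrow> 'a topology" where
  "inverse_topology Y = topology_generated_by {topspace Y - U | U. qc_open Y U}"

definition Xprime :: "'a topology \<Rightarrow> 'a set set" where
  "Xprime X = {Y. closedin X Y \<and> Y \<noteq> {}}"

definition Uprime :: "'a topology \<Rightarrow> 'a set \<Rightarrow> 'a set set" where
  "Uprime X \<Omega> = {Y \<in> Xprime X. Y \<inter> \<Omega> = {}}"

definition zariski_Xprime :: "'a topology \<Rightarrow> 'a set topology" where
  "zariski_Xprime X = topology_generated_by {Uprime X \<Omega> | \<Omega>. qc_open X \<Omega>}"

definition lower_vietoris :: "'a topology \<Rightarrow> 'a set topology" where
  "lower_vietoris X = topology_generated_by {{C \<in> Xprime X. C \<inter> U \<noteq> {}} | U. openin X U}"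

end

theory Submission
  imports Defs
begin

text \<open>The sets \<open>U'(\<Omega>)\<close> are closed under binary intersection, \<open>U'(\<Omega>) \<inter> U'(\<Omega>') = U'(\<Omega> \<union> \<Omega>')\<close>,
  so they form a basis of the Zariski topology; its open sets are therefore closed under passing to
  smaller nonempty closed sets. Since \<open>U'(\<Omega>)\<close> has the largest element \<open>X - \<Omega>\<close>, it is
  quasi-compact, and the quasi-compact opens of \<open>X'(X)\<close> are exactly the finite unions of the
  \<open>U'(\<Omega>)\<close>. For an irreducible closed family \<open>\<C>\<close>, irreducibility and quasi-compactness of
  \<open>\<Omega>\<close> show that a quasi-compact open \<open>\<Omega>\<close> disjoint from \<open>\<Inter>\<C>\<close> is disjoint from a member of
  \<open>\<C>\<close>; hence \<open>\<Inter>\<C>\<close> is nonempty, belongs to \<open>\<C>\<close> and is its generic point. Finally the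
  complement of \<open>U'(\<Omega>)\<close> is the lower Vietoris set \<open>\<Omega>\<^sup>-\<close>, and \<open>U\<^sup>-\<close> is the union of the \<open>\<Omega>\<^sup>-\<close>
  with \<open>\<Omega> \<subseteq> U\<close> quasi-compact, so both topologies have the same subbasic open sets.\<close>

lemma topology_generated_by_eqI:
  assumes "\<And>s. s \<in> \<S> \<Longrightarrow> openin (topology_generated_by \<T>) s"
    and "\<And>t. t \<in> \<T> \<Longrightarrow> openin (topology_generated_by \<S>) t"
  shows "topology_generated_by \<S> = topology_generated_by \<T>"
  unfolding topology_eq
proof (intro allI iffI)
  fix s
  assume "openin (topology_generated_by \<S>) s"
  then show "openin (topology_generated_by \<T>) s"
    using generate_topology_on_coarsest[OF istopology_openin assms(1)] openin_topology_generated_by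
    by blast
next
  fix s
  assume "openin (topology_generated_by \<T>) s"
  then show "openin (topology_generated_by \<S>) s"
    using generate_topology_on_coarsest[OF istopology_openin assms(2)] openin_topology_generated_by
    by blast
qed

lemma openin_topology_generated_by_Int_closed:
  assumes "\<And>A B. A \<in> \<B> \<Longrightarrow> B \<in> \<B> \<Longrightarrow> A \<inter> B \<in> \<B>"
  shows "openin (topology_generated_by \<B>) = arbitrary union_of (\<lambda>V. V \<in> \<B>)"
proof -
  have top: "istopology (arbitrary union_of (\<lambda>V. V \<in> \<B>))"
    using assms by (intro istopology_base)
  have "generate_topology_on \<B> = arbitrary union_of (\<lambda>V. V \<in> \<B>)"
  proof (intro ext iffI)
    fix V assume "generate_topology_on \<B> V"
    then show "(arbitrary union_of (\<lambda>V. V \<in> \<B>)) V"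
      by (rule generate_topology_on_coarsest[OF top, rotated]) (simp add: arbitrary_union_of_inc)
  next
    fix V assume "(arbitrary union_of (\<lambda>V. V \<in> \<B>)) V"
    then obtain \<U> where "\<U> \<subseteq> \<B>" "V = \<Union>\<U>"
      unfolding union_of_def by auto
    then show "generate_topology_on \<B> V"
      by (auto intro: generate_topology_on.UN generate_topology_on.Basis)
  qed
  then show ?thesis
    using topology_inverse'[OF istopology_generate_topology_on] by metis
qed

lemma irreducible_in_Int_openin:
  assumes "irreducible_in X C" "openin X U" "openin X V" "C \<inter> U \<noteq> {}" "C \<inter> V \<noteq> {}"
  shows "C \<inter> (U \<inter> V) \<noteq> {}"
proof
  assume disj: "C \<inter> (U \<inter> V) = {}"
  have C: "C \<subseteq> topspace X"
    using assms(1) by (simp add: irreducible_in_def)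
  have "C \<subseteq> (topspace X - U) \<union> (topspace X - V)"
    using C disj by blast
  moreover have "closedin X (topspace X - U)" "closedin X (topspace X - V)"
    using assms(2,3) by auto
  ultimately have "C \<subseteq> topspace X - U \<or> C \<subseteq> topspace X - V"
    using assms(1) unfolding irreducible_in_def by blast
  then show False
    using assms(4,5) by blast
qed

lemma qc_open_Un: "qc_open X A \<Longrightarrow> qc_open X B \<Longrightarrow> qc_open X (A \<union> B)"
  by (auto simp: qc_open_def compactin_Un)

lemma qc_open_Union: "finite \<F> \<Longrightarrow> (\<And>A. A \<in> \<F> \<Longrightarrow> qc_open X A) \<Longrightarrow> qc_open X (\<Union>\<F>)"
  by (auto simp: qc_open_def intro: compactin_Union)

lemma qc_open_empty [simp]: "qc_open X {}"
  by (simp add: qc_open_def)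

lemma spectral_space_qc_open_nbhd:
  assumes "spectral_space X" "openin X U" "x \<in> U"
  obtains \<Omega> where "qc_open X \<Omega>" "x \<in> \<Omega>" "\<Omega> \<subseteq> U"
proof -
  have "openin X = arbitrary union_of (qc_open X)"
    using assms(1) unfolding spectral_space_def by (elim conjE)
  then have "\<forall>U x. openin X U \<and> x \<in> U \<longrightarrow> (\<exists>V. qc_open X V \<and> x \<in> V \<and> V \<subseteq> U)"
    unfolding openin_topology_base_unique by (rule conjunct2)
  then show ?thesis
    using assms(2,3) that by blast
qed

lemma Uprime_Un: "Uprime X (A \<union> B) = Uprime X A \<inter> Uprime X B"
  by (auto simp: Uprime_def)

lemma Uprime_empty: "Uprime X {} = Xprime X"
  by (simp add: Uprime_def)

lemma topspace_zariski_Xprime [simp]: "topspace (zariski_Xprime X) = Xprime X"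
  unfolding zariski_Xprime_def topology_generated_by_topspace
proof (rule antisym)
  show "\<Union>{Uprime X \<Omega> |\<Omega>. qc_open X \<Omega>} \<subseteq> Xprime X"
    by (auto simp: Uprime_def)
  have "Uprime X {} \<in> {Uprime X \<Omega> |\<Omega>. qc_open X \<Omega>}"
    by (intro CollectI exI[of _ "{}"]) simp
  then show "Xprime X \<subseteq> \<Union>{Uprime X \<Omega> |\<Omega>. qc_open X \<Omega>}"
    unfolding Uprime_empty[symmetric] by (rule Union_upper)
qed

lemma openin_zariski_Xprime_Uprime: "qc_open X \<Omega> \<Longrightarrow> openin (zariski_Xprime X) (Uprime X \<Omega>)"
  unfolding zariski_Xprime_def by (rule topology_generated_by_Basis) blast

lemma openin_zariski_Xprime:
  "openin (zariski_Xprime X) = arbitrary union_of (\<lambda>V. V \<in> {Uprime X \<Omega> |\<Omega>. qc_open X \<Omega>})"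
  unfolding zariski_Xprime_def
proof (rule openin_topology_generated_by_Int_closed)
  fix U V assume "U \<in> {Uprime X \<Omega> |\<Omega>. qc_open X \<Omega>}" "V \<in> {Uprime X \<Omega> |\<Omega>. qc_open X \<Omega>}"
  then obtain A B where "qc_open X A" "qc_open X B" "U = Uprime X A" "V = Uprime X B"
    by blast
  then have "qc_open X (A \<union> B)" "U \<inter> V = Uprime X (A \<union> B)"
    by (simp_all add: qc_open_Un Uprime_Un)
  then show "U \<inter> V \<in> {Uprime X \<Omega> |\<Omega>. qc_open X \<Omega>}"
    by blast
qed

lemma zariski_Xprime_nbhd:
  assumes "openin (zariski_Xprime X) V" "Y \<in> V"
  obtains \<Omega> where "qc_open X \<Omega>" "Y \<in> Uprime X \<Omega>" "Uprime X \<Omega> \<subseteq> V"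
proof -
  have "\<forall>U x. openin (zariski_Xprime X) U \<and> x \<in> U \<longrightarrow>
      (\<exists>W. W \<in> {Uprime X \<Omega> |\<Omega>. qc_open X \<Omega>} \<and> x \<in> W \<and> W \<subseteq> U)"
    using openin_zariski_Xprime[of X] unfolding openin_topology_base_unique by (rule conjunct2)
  then obtain W where "W \<in> {Uprime X \<Omega> |\<Omega>. qc_open X \<Omega>}" "Y \<in> W" "W \<subseteq> V"
    using assms by meson
  then show ?thesis
    using that by blast
qed

lemma openin_zariski_Xprime_downward:
  assumes "openin (zariski_Xprime X) V" "Y \<in> V" "Y' \<in> Xprime X" "Y' \<subseteq> Y"
  shows "Y' \<in> V"
proof -
  obtain \<Omega> where "Y \<in> Uprime X \<Omega>" "Uprime X \<Omega> \<subseteq> V"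
    using zariski_Xprime_nbhd[OF assms(1,2)] .
  then show ?thesis
    using assms(3,4) by (auto simp: Uprime_def)
qed

text \<open>\<open>topspace X - \<Omega>\<close> is the largest element of \<open>Uprime X \<Omega>\<close>, so by downward closure
  any open set containing it contains all of \<open>Uprime X \<Omega>\<close>.\<close>
lemma compactin_zariski_Xprime_Uprime:
  assumes "openin X \<Omega>"
  shows "compactin (zariski_Xprime X) (Uprime X \<Omega>)"
proof (cases "Uprime X \<Omega> = {}")
  case False
  define M where "M = topspace X - \<Omega>"
  have below_M: "Y \<subseteq> M" if "Y \<in> Uprime X \<Omega>" for Y
    using that closedin_subset by (auto simp: M_def Uprime_def Xprime_def)
  have M: "M \<in> Uprime X \<Omega>"
    using False assms below_M by (auto simp: M_def Uprime_def Xprime_def)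
  have "\<exists>\<F>. finite \<F> \<and> \<F> \<subseteq> \<U> \<and> Uprime X \<Omega> \<subseteq> \<Union>\<F>"
    if \<U>: "\<forall>U\<in>\<U>. openin (zariski_Xprime X) U" "Uprime X \<Omega> \<subseteq> \<Union>\<U>" for \<U>
  proof -
    obtain C where C: "C \<in> \<U>" "M \<in> C"
      using M \<U>(2) by blast
    have "Uprime X \<Omega> \<subseteq> C"
    proof
      fix Y assume "Y \<in> Uprime X \<Omega>"
      then show "Y \<in> C"
        using openin_zariski_Xprime_downward[of X C M Y] below_M C \<U>(1) by (simp add: Uprime_def)
    qed
    then show ?thesis
      using C(1) by (intro exI[of _ "{C}"]) simp
  qed
  moreover have "Uprime X \<Omega> \<subseteq> topspace (zariski_Xprime X)"
    by (simp add: Uprime_def)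
  ultimately show ?thesis
    unfolding compactin_def by blast
qed simp

lemma qc_open_zariski_Xprime_Uprime: "qc_open X \<Omega> \<Longrightarrow> qc_open (zariski_Xprime X) (Uprime X \<Omega>)"
  by (simp add: qc_open_def openin_zariski_Xprime_Uprime compactin_zariski_Xprime_Uprime)

lemma qc_open_zariski_Xprime_iff:
  "qc_open (zariski_Xprime X) V \<longleftrightarrow>
     (\<exists>F. finite F \<and> (\<forall>\<Omega>\<in>F. qc_open X \<Omega>) \<and> V = (\<Union>\<Omega>\<in>F. Uprime X \<Omega>))"
proof
  assume V: "qc_open (zariski_Xprime X) V"
  define S where "S = {\<Omega>. qc_open X \<Omega> \<and> Uprime X \<Omega> \<subseteq> V}"
  have "V \<subseteq> (\<Union>\<Omega>\<in>S. Uprime X \<Omega>)"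
  proof
    fix Y assume "Y \<in> V"
    then obtain \<Omega> where "qc_open X \<Omega>" "Y \<in> Uprime X \<Omega>" "Uprime X \<Omega> \<subseteq> V"
      using V zariski_Xprime_nbhd unfolding qc_open_def by metis
    then show "Y \<in> (\<Union>\<Omega>\<in>S. Uprime X \<Omega>)"
      unfolding S_def by blast
  qed
  moreover have "\<forall>U \<in> Uprime X ` S. openin (zariski_Xprime X) U"
    by (simp add: S_def openin_zariski_Xprime_Uprime)
  ultimately obtain \<F> where "finite \<F>" "\<F> \<subseteq> Uprime X ` S" "V \<subseteq> \<Union>\<F>"
    using V unfolding qc_open_def compactin_def by meson
  then obtain F where "finite F" "F \<subseteq> S" "V \<subseteq> (\<Union>\<Omega>\<in>F. Uprime X \<Omega>)"
    by (metis finite_subset_image)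
  then show "\<exists>F. finite F \<and> (\<forall>\<Omega>\<in>F. qc_open X \<Omega>) \<and> V = (\<Union>\<Omega>\<in>F. Uprime X \<Omega>)"
    unfolding S_def by (intro exI[of _ F]) blast
next
  assume "\<exists>F. finite F \<and> (\<forall>\<Omega>\<in>F. qc_open X \<Omega>) \<and> V = (\<Union>\<Omega>\<in>F. Uprime X \<Omega>)"
  then obtain F where F: "finite F" "\<forall>\<Omega>\<in>F. qc_open X \<Omega>" "V = (\<Union>\<Omega>\<in>F. Uprime X \<Omega>)"
    by blast
  have "openin (zariski_Xprime X) V"
    unfolding F(3) using F(2) by (intro openin_Union) (auto simp: openin_zariski_Xprime_Uprime)
  moreover have "compactin (zariski_Xprime X) V"
    unfolding F(3) using F(1,2)
    by (intro compactin_Union) (auto simp: qc_open_def compactin_zariski_Xprime_Uprime)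
  ultimately show "qc_open (zariski_Xprime X) V"
    by (simp add: qc_open_def)
qed

lemma qc_open_zariski_Xprime_Int:
  assumes "qc_open (zariski_Xprime X) U" "qc_open (zariski_Xprime X) V"
  shows "qc_open (zariski_Xprime X) (U \<inter> V)"
proof -
  obtain F where F: "finite F" "\<forall>\<Omega>\<in>F. qc_open X \<Omega>" "U = (\<Union>\<Omega>\<in>F. Uprime X \<Omega>)"
    using qc_open_zariski_Xprime_iff[THEN iffD1, OF assms(1)] by (elim exE conjE)
  obtain G where G: "finite G" "\<forall>\<Omega>\<in>G. qc_open X \<Omega>" "V = (\<Union>\<Omega>\<in>G. Uprime X \<Omega>)"
    using qc_open_zariski_Xprime_iff[THEN iffD1, OF assms(2)] by (elim exE conjE)
  define H where "H = (\<lambda>(A, B). A \<union> B) ` (F \<times> G)"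
  have "U \<inter> V = (\<Union>\<Omega>\<in>H. Uprime X \<Omega>)"
    unfolding F(3) G(3) H_def by (auto simp: Uprime_Un)
  moreover have "finite H" "\<forall>\<Omega>\<in>H. qc_open X \<Omega>"
    using F G by (auto simp: H_def intro: qc_open_Un)
  ultimately show ?thesis
    by (intro qc_open_zariski_Xprime_iff[THEN iffD2] exI[of _ H] conjI)
qed

lemma openin_zariski_Xprime_eq_union_of_qc_open:
  "openin (zariski_Xprime X) = arbitrary union_of (qc_open (zariski_Xprime X))"
  unfolding openin_topology_base_unique
proof (intro conjI allI impI)
  fix V assume "qc_open (zariski_Xprime X) V"
  then show "openin (zariski_Xprime X) V"
    by (simp add: qc_open_def)
next
  fix V Y assume "openin (zariski_Xprime X) V \<and> Y \<in> V"
  then obtain \<Omega> where "qc_open X \<Omega>" "Y \<in> Uprime X \<Omega>" "Uprime X \<Omega> \<subseteq> V"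
    using zariski_Xprime_nbhd by metis
  then show "\<exists>W. qc_open (zariski_Xprime X) W \<and> Y \<in> W \<and> W \<subseteq> V"
    using qc_open_zariski_Xprime_Uprime by blast
qed

lemma t0_space_zariski_Xprime:
  assumes "spectral_space X"
  shows "t0_space (zariski_Xprime X)"
proof -
  have separate: "\<exists>U. openin (zariski_Xprime X) U \<and> Y2 \<in> U \<and> Y1 \<notin> U"
    if "Y1 \<in> Xprime X" "Y2 \<in> Xprime X" "x \<in> Y1" "x \<notin> Y2" for Y1 Y2 x
  proof -
    have "openin X (topspace X - Y2)" "x \<in> topspace X - Y2"
      using that closedin_subset by (auto simp: Xprime_def)
    then obtain \<Omega> where "qc_open X \<Omega>" "x \<in> \<Omega>" "\<Omega> \<subseteq> topspace X - Y2"
      using spectral_space_qc_open_nbhd[OF assms] by blast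
    then show ?thesis
      using that openin_zariski_Xprime_Uprime by (intro exI[of _ "Uprime X \<Omega>"]) (auto simp: Uprime_def)
  qed
  show ?thesis
    unfolding t0_space_def topspace_zariski_Xprime
  proof (intro ballI impI)
    fix Y1 Y2 assume Y: "Y1 \<in> Xprime X" "Y2 \<in> Xprime X" "Y1 \<noteq> Y2"
    then consider x where "x \<in> Y1" "x \<notin> Y2" | x where "x \<in> Y2" "x \<notin> Y1"
      by blast
    then show "\<exists>U. openin (zariski_Xprime X) U \<and> (Y1 \<notin> U) = (Y2 \<in> U)"
      by cases (metis Y(1,2) separate)+
  qed
qed

lemma irreducible_zariski_Xprime_meets_Uprime_Union:
  assumes "irreducible_in (zariski_Xprime X) \<C>" "finite F"
    and "\<And>\<Omega>. \<Omega> \<in> F \<Longrightarrow> qc_open X \<Omega> \<and> \<C> \<inter> Uprime X \<Omega> \<noteq> {}"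
  shows "\<C> \<inter> Uprime X (\<Union>F) \<noteq> {}"
  using assms(2,3)
proof (induction F rule: finite_induct)
  case empty
  have "\<C> \<subseteq> Xprime X" "\<C> \<noteq> {}"
    using assms(1) by (auto simp: irreducible_in_def)
  then show ?case
    by (auto simp: Uprime_empty)
next
  case (insert \<Omega> F)
  have "qc_open X \<Omega>" "qc_open X (\<Union>F)"
    using insert by (auto intro: qc_open_Union)
  then have "\<C> \<inter> (Uprime X \<Omega> \<inter> Uprime X (\<Union>F)) \<noteq> {}"
    using insert by (intro irreducible_in_Int_openin[OF assms(1)] openin_zariski_Xprime_Uprime) auto
  then show ?case
    by (simp add: Uprime_Un)
qed

lemma irreducible_zariski_Xprime_avoids:
  assumes sp: "spectral_space X" and irr: "irreducible_in (zariski_Xprime X) \<C>"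
    and \<Omega>: "qc_open X \<Omega>" "\<Omega> \<inter> \<Inter>\<C> = {}"
  obtains W where "W \<in> \<C>" "W \<inter> \<Omega> = {}"
proof -
  have \<C>: "\<C> \<subseteq> Xprime X"
    using irr by (simp add: irreducible_in_def)
  define S where "S = {\<Omega>'. qc_open X \<Omega>' \<and> \<C> \<inter> Uprime X \<Omega>' \<noteq> {}}"
  have cover: "\<Omega> \<subseteq> \<Union>S"
  proof
    fix x assume x: "x \<in> \<Omega>"
    then obtain W where W: "W \<in> \<C>" "x \<notin> W"
      using \<Omega>(2) by blast
    have "closedin X W"
      using W(1) \<C> by (auto simp: Xprime_def)
    then have "openin X (topspace X - W)"
      by (rule openin_diff[OF openin_topspace])
    moreover have "x \<in> topspace X - W"
      using x W(2) \<Omega>(1) openin_subset by (auto simp: qc_open_def)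
    ultimately obtain \<Omega>' where \<Omega>': "qc_open X \<Omega>'" "x \<in> \<Omega>'" "\<Omega>' \<subseteq> topspace X - W"
      by (rule spectral_space_qc_open_nbhd[OF sp])
    then have "W \<in> \<C> \<inter> Uprime X \<Omega>'"
      using W(1) \<C> by (auto simp: Uprime_def)
    then have "\<Omega>' \<in> S"
      using \<Omega>'(1) unfolding S_def by blast
    then show "x \<in> \<Union>S"
      using \<Omega>'(2) by (rule UnionI)
  qed
  have "\<forall>U\<in>S. openin X U"
    by (simp add: S_def qc_open_def)
  moreover have "compactin X \<Omega>"
    using \<Omega>(1) by (simp add: qc_open_def)
  ultimately obtain F where F: "finite F" "F \<subseteq> S" "\<Omega> \<subseteq> \<Union>F"
    using cover unfolding compactin_def by (metis (no_types, lifting))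
  then have "\<C> \<inter> Uprime X (\<Union>F) \<noteq> {}"
    by (intro irreducible_zariski_Xprime_meets_Uprime_Union[OF irr]) (auto simp: S_def)
  then obtain W where W: "W \<in> \<C>" "W \<inter> \<Union>F = {}"
    by (auto simp: Uprime_def)
  have "W \<inter> \<Omega> = {}"
    using F(3) W(2) by auto
  with W(1) show ?thesis
    by (rule that)
qed

lemma zariski_Xprime_generic_point:
  assumes sp: "spectral_space X" and cl: "closedin (zariski_Xprime X) \<C>"
    and irr: "irreducible_in (zariski_Xprime X) \<C>"
  shows "\<Inter>\<C> \<in> \<C>" "zariski_Xprime X closure_of {\<Inter>\<C>} = \<C>"
proof -
  have \<C>: "\<C> \<subseteq> Xprime X" "\<C> \<noteq> {}"
    using irr by (auto simp: irreducible_in_def)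
  have "closedin X (\<Inter>\<C>)"
    using \<C> by (intro closedin_Inter) (auto simp: Xprime_def)
  moreover have "\<Inter>\<C> \<noteq> {}"
  proof
    assume empty: "\<Inter>\<C> = {}"
    have "compact_space X"
      using sp unfolding spectral_space_def by (elim conjE)
    then have "qc_open X (topspace X)"
      by (simp add: qc_open_def compact_space_def)
    moreover have "topspace X \<inter> \<Inter>\<C> = {}"
      using empty by simp
    ultimately obtain W where W: "W \<in> \<C>" "W \<inter> topspace X = {}"
      by (rule irreducible_zariski_Xprime_avoids[OF sp irr])
    have "W \<subseteq> topspace X" "W \<noteq> {}"
      using \<C>(1) W(1) closedin_subset by (auto simp: Xprime_def)
    with W(2) show False
      by blast
  qed
  ultimately have Y: "\<Inter>\<C> \<in> Xprime X"
    by (simp add: Xprime_def)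
  show Y_in: "\<Inter>\<C> \<in> \<C>"
  proof (rule ccontr)
    assume "\<Inter>\<C> \<notin> \<C>"
    moreover have "openin (zariski_Xprime X) (Xprime X - \<C>)"
      using cl by (simp add: closedin_def)
    ultimately obtain \<Omega> where \<Omega>: "qc_open X \<Omega>" "\<Inter>\<C> \<in> Uprime X \<Omega>" "Uprime X \<Omega> \<subseteq> Xprime X - \<C>"
      using Y by (metis DiffI zariski_Xprime_nbhd)
    then have "\<Omega> \<inter> \<Inter>\<C> = {}"
      by (auto simp: Uprime_def)
    then obtain W where "W \<in> \<C>" "W \<inter> \<Omega> = {}"
      by (rule irreducible_zariski_Xprime_avoids[OF sp irr \<Omega>(1)])
    then show False
      using \<Omega>(3) \<C>(1) by (auto simp: Uprime_def)
  qed
  show "zariski_Xprime X closure_of {\<Inter>\<C>} = \<C>"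
  proof
    show "zariski_Xprime X closure_of {\<Inter>\<C>} \<subseteq> \<C>"
      using Y_in cl by (intro closure_of_minimal) auto
    show "\<C> \<subseteq> zariski_Xprime X closure_of {\<Inter>\<C>}"
      unfolding in_closure_of subset_iff
      using \<C>(1) Y openin_zariski_Xprime_downward[of X _ _ "\<Inter>\<C>"] by (auto simp: Inf_lower)
  qed
qed

lemma spectral_space_zariski_Xprime:
  assumes "spectral_space X"
  shows "spectral_space (zariski_Xprime X)"
  unfolding spectral_space_def
proof (intro conjI allI impI)
  show "compact_space (zariski_Xprime X)"
    unfolding compact_space_def topspace_zariski_Xprime Uprime_empty[symmetric]
    by (simp add: compactin_zariski_Xprime_Uprime)
  show "t0_space (zariski_Xprime X)"
    using assms by (rule t0_space_zariski_Xprime)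
  show "openin (zariski_Xprime X) = arbitrary union_of qc_open (zariski_Xprime X)"
    by (rule openin_zariski_Xprime_eq_union_of_qc_open)
next
  fix U V assume "qc_open (zariski_Xprime X) U \<and> qc_open (zariski_Xprime X) V"
  then show "qc_open (zariski_Xprime X) (U \<inter> V)"
    by (simp add: qc_open_zariski_Xprime_Int)
next
  fix \<C> assume \<C>: "closedin (zariski_Xprime X) \<C> \<and> irreducible_in (zariski_Xprime X) \<C>"
  then have "\<Inter>\<C> \<in> topspace (zariski_Xprime X)"
    using zariski_Xprime_generic_point(1)[OF assms] closedin_subset by blast
  moreover have "zariski_Xprime X closure_of {\<Inter>\<C>} = \<C>"
    using \<C> zariski_Xprime_generic_point(2)[OF assms] by blast
  ultimately show "\<exists>Y\<in>topspace (zariski_Xprime X). zariski_Xprime X closure_of {Y} = \<C>"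
    by blast
qed

definition hits :: "'a topology \<Rightarrow> 'a set \<Rightarrow> 'a set set" where
  "hits X U = {C \<in> Xprime X. C \<inter> U \<noteq> {}}"

lemma Xprime_diff_Uprime: "Xprime X - Uprime X \<Omega> = hits X \<Omega>"
  by (auto simp: hits_def Uprime_def)

lemma openin_lower_vietoris_hits: "openin X U \<Longrightarrow> openin (lower_vietoris X) (hits X U)"
  unfolding lower_vietoris_def hits_def
  by (rule topology_generated_by_Basis) (intro CollectI exI[of _ U] conjI refl)

lemma openin_lower_vietoris_Xprime_diff:
  assumes "qc_open (zariski_Xprime X) V"
  shows "openin (lower_vietoris X) (Xprime X - V)"
proof -
  obtain F where F: "finite F" "\<forall>\<Omega>\<in>F. qc_open X \<Omega>" "V = (\<Union>\<Omega>\<in>F. Uprime X \<Omega>)"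
    using qc_open_zariski_Xprime_iff[THEN iffD1, OF assms] by (elim exE conjE)
  text \<open>\<open>topspace X\<close> is added so that the intersection is not empty when \<open>F\<close> is.\<close>
  have "Xprime X - V = (\<Inter>\<Omega>\<in>insert (topspace X) F. hits X \<Omega>)"
    unfolding F(3) using closedin_subset by (fastforce simp: hits_def Uprime_def Xprime_def)
  moreover have "openin (lower_vietoris X) (\<Inter>\<Omega>\<in>insert (topspace X) F. hits X \<Omega>)"
    using F(1,2) by (intro openin_Inter) (auto simp: qc_open_def intro: openin_lower_vietoris_hits)
  ultimately show ?thesis
    by simp
qed

lemma openin_inverse_topology_hits:
  assumes sp: "spectral_space X" and U: "openin X U"
  shows "openin (inverse_topology (zariski_Xprime X)) (hits X U)"
proof -
  have hits_eq: "hits X U = (\<Union>\<Omega>\<in>{\<Omega>. qc_open X \<Omega> \<and> \<Omega> \<subseteq> U}. hits X \<Omega>)"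
  proof
    show "hits X U \<subseteq> (\<Union>\<Omega>\<in>{\<Omega>. qc_open X \<Omega> \<and> \<Omega> \<subseteq> U}. hits X \<Omega>)"
    proof
      fix C assume "C \<in> hits X U"
      then obtain x where x: "C \<in> Xprime X" "x \<in> C" "x \<in> U"
        by (auto simp: hits_def)
      then obtain \<Omega> where "qc_open X \<Omega>" "x \<in> \<Omega>" "\<Omega> \<subseteq> U"
        by (meson U spectral_space_qc_open_nbhd[OF sp])
      then show "C \<in> (\<Union>\<Omega>\<in>{\<Omega>. qc_open X \<Omega> \<and> \<Omega> \<subseteq> U}. hits X \<Omega>)"
        using x by (auto simp: hits_def)
    qed
  qed (auto simp: hits_def)
  have "openin (inverse_topology (zariski_Xprime X)) (hits X \<Omega>)" if "qc_open X \<Omega>" for \<Omega>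
  proof -
    have "hits X \<Omega> = topspace (zariski_Xprime X) - Uprime X \<Omega>"
      by (simp add: Xprime_diff_Uprime)
    then show ?thesis
      unfolding inverse_topology_def using qc_open_zariski_Xprime_Uprime[OF that]
      by (intro topology_generated_by_Basis) blast
  qed
  then show ?thesis
    unfolding hits_eq by (intro openin_Union) auto
qed

theorem proposition4p3:
  fixes X :: "'a topology"
  assumes "spectral_space X"
  shows "spectral_space (zariski_Xprime X) \<and>
         inverse_topology (zariski_Xprime X) = lower_vietoris X"
proof
  show "spectral_space (zariski_Xprime X)"
    using assms by (rule spectral_space_zariski_Xprime)
  show "inverse_topology (zariski_Xprime X) = lower_vietoris X"
    unfolding inverse_topology_def lower_vietoris_def
  proof (rule topology_generated_by_eqI)
    fix s assume "s \<in> {topspace (zariski_Xprime X) - V |V. qc_open (zariski_Xprime X) V}"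
    then obtain V where "qc_open (zariski_Xprime X) V" "s = Xprime X - V"
      by auto
    then show "openin (topology_generated_by {{C \<in> Xprime X. C \<inter> U \<noteq> {}} |U. openin X U}) s"
      using openin_lower_vietoris_Xprime_diff unfolding lower_vietoris_def by blast
  next
    fix t assume "t \<in> {{C \<in> Xprime X. C \<inter> U \<noteq> {}} |U. openin X U}"
    then obtain U where "openin X U" "t = hits X U"
      unfolding hits_def by blast
    then show "openin (topology_generated_by {topspace (zariski_Xprime X) - V |V. qc_open (zariski_Xprime X) V}) t"
      using openin_inverse_topology_hits[OF assms] unfolding inverse_topology_def by blast
  qed
qed

end
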